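(* Let $A$ be a commutative ring with $1$, $M\in\operatorname{Sym}_n(A)$, $a\in A$, $v\in A^n$ and $b\in\Sigma(a)$ (with $a$ regarded as a $1\times 1$ matrix). If $av\in\Sigma(M)$, then $b^2v\in\Sigma(M)$.
   Context: $\Sigma A^2$ denotes the set of finite sums of squares in $A$. A matrix $N\in\operatorname{Sym}_n(A)$ is a sum of squares if $N=\sum_{i=1}^m w_iw_i^{t}$ for some column vectors $w_i\in A^n$. For $M\in\operatorname{Sym}_n(A)$, $\Sigma(M)$ is the set of $v\in A^n$ such that $sM=vv^{t}+N$ for some $s\in\Sigma A^2$ and some sum of squares $N\in\operatorname{Sym}_n(A)$. For $n=1$: $b\in\Sigma(a)$ iff $sa=b^2+t$ for some $s,t\in\Sigma A^2$. *)

theory Defs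
  imports "Jordan_Normal_Form.Matrix"
begin

definition sum_sq :: "'a::comm_ring_1 \<Rightarrow> bool" where
  "sum_sq s \<longleftrightarrow> (\<exists>xs. s = sum_list (map (\<lambda>x. x * x) xs))"

definition outer :: "'a::comm_ring_1 vec \<Rightarrow> 'a mat" where
  "outer v = mat (dim_vec v) (dim_vec v) (\<lambda>(i, j). v $ i * v $ j)"

definition sos_mat :: "nat \<Rightarrow> 'a::comm_ring_1 mat \<Rightarrow> bool" where
  "sos_mat n N \<longleftrightarrow> (\<exists>ws. set ws \<subseteq> carrier_vec n \<and>
      N = foldr (\<lambda>w acc. outer w + acc) ws (0\<^sub>m n n))"

definition Sigma_set :: "nat \<Rightarrow> 'a::comm_ring_1 mat \<Rightarrow> 'a vec set" where
  "Sigma_set n M = {v \<in> carrier_vec n. \<exists>s N. sum_sq s \<and> sos_mat n N \<and>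
      s \<cdot>\<^sub>m M = outer v + N}"

end

theory Submission
  imports Defs
begin

text \<open>
  Write \<open>b \<in> \<Sigma>(a)\<close> as \<open>s a = b\<^sup>2 + t\<close> and \<open>a v \<in> \<Sigma>(M)\<close> as \<open>s' M = a\<^sup>2 v v\<^sup>t + N\<close>.
  Multiplying the second identity by \<open>s\<^sup>2\<close> gives
  \<open>s\<^sup>2 s' M = (b\<^sup>2 + t)\<^sup>2 v v\<^sup>t + s\<^sup>2 N = (b\<^sup>2 v)(b\<^sup>2 v)\<^sup>t + ((2 b\<^sup>2 t + t\<^sup>2) v v\<^sup>t + s\<^sup>2 N)\<close>,
  and the bracket is again a sum of squares.
\<close>

lemma sum_sq_square: "sum_sq (x * x)"
  unfolding sum_sq_def by (rule exI[of _ "[x]"]) simp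

lemma sum_sq_add: "sum_sq a \<Longrightarrow> sum_sq b \<Longrightarrow> sum_sq (a + b)"
  unfolding sum_sq_def by (metis map_append sum_list_append)

lemma sum_list_squares_mult:
  fixes xs ys :: "'a::comm_ring_1 list"
  shows "sum_list (map (\<lambda>x. x * x) xs) * sum_list (map (\<lambda>x. x * x) ys)
       = sum_list (map (\<lambda>x. x * x) (concat (map (\<lambda>x. map ((*) x) ys) xs)))"
proof (induction xs)
  case (Cons x xs)
  have "x * x * sum_list (map (\<lambda>y. y * y) ys) = sum_list (map (\<lambda>y. (x * y) * (x * y)) ys)"
    by (induction ys) (simp_all add: algebra_simps)
  then show ?case
    using Cons by (simp add: algebra_simps o_def)
qed simp

lemma sum_sq_mult: "sum_sq a \<Longrightarrow> sum_sq b \<Longrightarrow> sum_sq (a * b)"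
  unfolding sum_sq_def by (auto simp only: sum_list_squares_mult)

abbreviation outer_sum :: "nat \<Rightarrow> 'a::comm_ring_1 vec list \<Rightarrow> 'a mat" where
  "outer_sum n ws \<equiv> foldr (\<lambda>w acc. outer w + acc) ws (0\<^sub>m n n)"

lemma outer_carrier: "w \<in> carrier_vec n \<Longrightarrow> outer w \<in> carrier_mat n n"
  unfolding outer_def by auto

lemma outer_sum_carrier: "set ws \<subseteq> carrier_vec n \<Longrightarrow> outer_sum n ws \<in> carrier_mat n n"
  by (induction ws) (auto simp: outer_carrier)

lemma outer_sum_append:
  assumes "set ws \<subseteq> carrier_vec n" and "set us \<subseteq> carrier_vec n"
  shows "outer_sum n (ws @ us) = outer_sum n ws + outer_sum n us"
  using assms
proof (induction ws)
  case Nil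
  then show ?case using outer_sum_carrier[of us n] by simp
next
  case (Cons w ws)
  then show ?case
    using outer_sum_carrier[of us n] outer_sum_carrier[of ws n] outer_carrier[of w n]
    by (simp add: assoc_add_mat)
qed

lemma outer_sum_smult_square:
  assumes "set ws \<subseteq> carrier_vec n"
  shows "(x * x) \<cdot>\<^sub>m outer_sum n ws = outer_sum n (map (\<lambda>w. x \<cdot>\<^sub>v w) ws)"
  using assms
proof (induction ws)
  case Nil
  then show ?case by (intro eq_matI) auto
next
  case (Cons w ws)
  then have "outer_sum n ws \<in> carrier_mat n n" "w \<in> carrier_vec n"
    using outer_sum_carrier by auto
  then have "(x * x) \<cdot>\<^sub>m (outer w + outer_sum n ws) = outer (x \<cdot>\<^sub>v w) + (x * x) \<cdot>\<^sub>m outer_sum n ws"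
    by (intro eq_matI) (auto simp: outer_def algebra_simps)
  then show ?case using Cons by simp
qed

lemma outer_sum_diag:
  assumes "set ws \<subseteq> carrier_vec n" and "i < n"
  shows "outer_sum n ws $$ (i, i) = sum_list (map (\<lambda>w. w $ i * w $ i) ws)"
  using assms
proof (induction ws)
  case (Cons w ws)
  then have "outer_sum n ws \<in> carrier_mat n n" "w \<in> carrier_vec n"
    using outer_sum_carrier by auto
  then show ?case
    using Cons by (simp add: outer_def)
qed simp

lemma sos_mat_carrier: "sos_mat n N \<Longrightarrow> N \<in> carrier_mat n n"
  unfolding sos_mat_def using outer_sum_carrier by blast

lemma sos_mat_outer: "w \<in> carrier_vec n \<Longrightarrow> sos_mat n (outer w)"
  unfolding sos_mat_def using outer_carrier[of w n] by (intro exI[of _ "[w]"]) simp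

lemma sos_mat_zero: "sos_mat n (0\<^sub>m n n)"
  unfolding sos_mat_def by (intro exI[of _ "[]"]) simp

lemma sos_mat_add:
  assumes "sos_mat n N" and "sos_mat n N'"
  shows "sos_mat n (N + N')"
proof -
  obtain ws us where "set ws \<subseteq> carrier_vec n" "N = outer_sum n ws"
    and "set us \<subseteq> carrier_vec n" "N' = outer_sum n us"
    using assms unfolding sos_mat_def by blast
  then show ?thesis
    unfolding sos_mat_def
    by (intro exI[of _ "ws @ us"]) (simp add: outer_sum_append del: foldr_append)
qed

lemma sos_mat_smult_square:
  assumes "sos_mat n N"
  shows "sos_mat n ((x * x) \<cdot>\<^sub>m N)"
proof -
  obtain ws where "set ws \<subseteq> carrier_vec n" "N = outer_sum n ws"
    using assms unfolding sos_mat_def by blast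
  then show ?thesis
    unfolding sos_mat_def
    by (intro exI[of _ "map (\<lambda>w. x \<cdot>\<^sub>v w) ws"]) (auto simp: outer_sum_smult_square)
qed

lemma sos_mat_smult:
  assumes "sum_sq c" and N: "sos_mat n N"
  shows "sos_mat n (c \<cdot>\<^sub>m N)"
proof -
  obtain xs where "c = sum_list (map (\<lambda>x. x * x) xs)"
    using assms(1) unfolding sum_sq_def by blast
  moreover have "sos_mat n (sum_list (map (\<lambda>x. x * x) xs) \<cdot>\<^sub>m N)"
  proof (induction xs)
    case Nil
    have "0 \<cdot>\<^sub>m N = 0\<^sub>m n n"
      using sos_mat_carrier[OF N] by (intro eq_matI) auto
    then show ?case using sos_mat_zero by simp
  next
    case (Cons x xs)
    have "sum_list (map (\<lambda>x. x * x) (x # xs)) \<cdot>\<^sub>m N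
        = (x * x) \<cdot>\<^sub>m N + sum_list (map (\<lambda>x. x * x) xs) \<cdot>\<^sub>m N"
      using sos_mat_carrier[OF N] by (intro eq_matI) (auto simp: algebra_simps)
    then show ?case
      using sos_mat_add[OF sos_mat_smult_square[OF N] Cons.IH] by simp
  qed
  ultimately show ?thesis by simp
qed

lemma sos_mat_diag_sum_sq:
  assumes "sos_mat n N" and "i < n"
  shows "sum_sq (N $$ (i, i))"
proof -
  obtain ws where "set ws \<subseteq> carrier_vec n" "N = outer_sum n ws"
    using assms(1) unfolding sos_mat_def by blast
  then have "N $$ (i, i) = sum_list (map (\<lambda>x. x * x) (map (\<lambda>w. w $ i) ws))"
    using assms(2) by (simp add: outer_sum_diag o_def)
  then show ?thesis
    unfolding sum_sq_def by blast
qed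

lemma Sigma_set_1_sum_sq:
  assumes "vec 1 (\<lambda>_. b) \<in> Sigma_set 1 (mat 1 1 (\<lambda>_. a))"
  obtains s t where "sum_sq s" "sum_sq t" "s * a = b * b + t"
proof -
  obtain s N where s: "sum_sq s" "sos_mat 1 N"
    and eq: "s \<cdot>\<^sub>m mat 1 1 (\<lambda>_. a) = outer (vec 1 (\<lambda>_. b)) + N"
    using assms unfolding Sigma_set_def by blast
  have "s * a = b * b + N $$ (0, 0)"
    using arg_cong[OF eq, of "\<lambda>X. X $$ (0, 0)"] sos_mat_carrier[OF s(2)]
    by (simp add: outer_def)
  then show ?thesis
    using that s sos_mat_diag_sum_sq[OF s(2)] by blast
qed

lemma Sigma_set_rescale:
  assumes M: "M \<in> carrier_mat n n" and v: "v \<in> carrier_vec n"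
    and cv: "c \<cdot>\<^sub>v v \<in> Sigma_set n M"
    and "sum_sq s" "sum_sq d" "sum_sq t" and sc: "s * c = d + t"
  shows "d \<cdot>\<^sub>v v \<in> Sigma_set n M"
proof -
  obtain s' N where s': "sum_sq s'" "sos_mat n N"
    and eq: "s' \<cdot>\<^sub>m M = outer (c \<cdot>\<^sub>v v) + N"
    using cv unfolding Sigma_set_def by blast
  have N: "N \<in> carrier_mat n n"
    using sos_mat_carrier[OF s'(2)] .
  define N' where "N' = (d * t + d * t + t * t) \<cdot>\<^sub>m outer v + (s * s) \<cdot>\<^sub>m N"
  have "sum_sq (d * t + d * t + t * t)"
    using assms(5,6) by (intro sum_sq_add sum_sq_mult sum_sq_square)
  then have N': "sos_mat n N'"
    unfolding N'_def using v s'(2)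
    by (intro sos_mat_add sos_mat_smult sos_mat_outer sos_mat_smult_square)
  have "(s * s * s') \<cdot>\<^sub>m M = outer (d \<cdot>\<^sub>v v) + N'"
  proof (rule eq_matI)
    fix i j
    assume "i < dim_row (outer (d \<cdot>\<^sub>v v) + N')" "j < dim_col (outer (d \<cdot>\<^sub>v v) + N')"
    then have ij: "i < n" "j < n"
      using v N' sos_mat_carrier by (auto simp: outer_def)
    have "((s * s * s') \<cdot>\<^sub>m M) $$ (i, j) = s * s * (s' \<cdot>\<^sub>m M) $$ (i, j)"
      using ij M by simp
    also have "\<dots> = (s * c) * (s * c) * (v $ i * v $ j) + s * s * N $$ (i, j)"
      unfolding eq using ij v N by (simp add: outer_def algebra_simps)
    also have "\<dots> = (d + t) * (d + t) * (v $ i * v $ j) + s * s * N $$ (i, j)"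
      unfolding sc ..
    also have "\<dots> = (outer (d \<cdot>\<^sub>v v) + N') $$ (i, j)"
      using ij v N unfolding N'_def by (simp add: outer_def algebra_simps)
    finally show "((s * s * s') \<cdot>\<^sub>m M) $$ (i, j) = (outer (d \<cdot>\<^sub>v v) + N') $$ (i, j)" .
  qed (use M v N' sos_mat_carrier in \<open>auto simp: outer_def\<close>)
  moreover have "sum_sq (s * s * s')"
    using sum_sq_mult[OF sum_sq_square s'(1)] .
  moreover have "d \<cdot>\<^sub>v v \<in> carrier_vec n"
    using v by simp
  ultimately show ?thesis
    using N' unfolding Sigma_set_def by blast
qed

theorem lemma3p9:
  fixes M :: "'a::comm_ring_1 mat" and a b :: 'a and v :: "'a vec" and n :: nat
  assumes "M \<in> carrier_mat n n" and "transpose_mat M = M"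
    and "v \<in> carrier_vec n"
    and "vec 1 (\<lambda>_. b) \<in> Sigma_set 1 (mat 1 1 (\<lambda>_. a))"
    and "a \<cdot>\<^sub>v v \<in> Sigma_set n M"
  shows "(b ^ 2) \<cdot>\<^sub>v v \<in> Sigma_set n M"
proof -
  obtain s t where "sum_sq s" "sum_sq t" "s * a = b * b + t"
    using Sigma_set_1_sum_sq[OF assms(4)] .
  then have "(b * b) \<cdot>\<^sub>v v \<in> Sigma_set n M"
    using Sigma_set_rescale[OF assms(1,3,5)] sum_sq_square by blast
  then show ?thesis
    by (simp add: power2_eq_square)
qed

end
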